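(* Let $(x_j, x_k)$ be a pair of jointly normal random variables with zero means, unit variances and correlation coefficient $\rho_{jk}$. Let $(x_j^{(1)},x_k^{(1)}),\dots,(x_j^{(n)},x_k^{(n)})$ be $n$ i.i.d. copies of $(x_j,x_k)$, and set $\hat x_j^{(i)} = \mathrm{sign}(x_j^{(i)})$, $\hat x_k^{(i)} = \mathrm{sign}(x_k^{(i)})$. Define $$\hat\beta_{jk} = \frac{1}{n}\sum_{i=1}^n \mathbb{I}\big(\hat x_j^{(i)}\hat x_k^{(i)} = 1\big), \qquad \hat\rho_{jk} = -\cos(\pi \hat\beta_{jk}).$$ Then for every $\delta \ge 0$, $$\Pr\big(|\hat\rho_{jk} - \rho_{jk}| \ge \delta\big) \le 2\exp\Big(-\frac{2}{\pi^2} n \delta^2\Big).$$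
   Context: $\mathbb{I}(\cdot)$ denotes the indicator function and $\mathrm{sign}(t)\in\{-1,+1\}$ is the sign of $t$ (the event $t=0$ has probability zero). *)

theory Defs
  imports "HOL-Probability.Probability"
begin

text \<open>The standard bivariate normal law with zero means, unit variances and
correlation coefficient rho (for -1 <= rho <= 1): the distribution of
(Z1, rho*Z1 + sqrt(1-rho^2)*Z2) with Z1, Z2 independent standard normals.
This covers the degenerate cases rho = +-1 as well.\<close>

definition std_bivariate_normal :: "real \<Rightarrow> (real \<times> real) measure" where
  "std_bivariate_normal \<rho> =
     distr (density lborel std_normal_density \<Otimes>\<^sub>M density lborel std_normal_density)
           (borel \<Otimes>\<^sub>M borel)
           (\<lambda>(z1, z2). (z1, \<rho> * z1 + sqrt (1 - \<rho>\<^sup>2) * z2))"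

definition beta_hat :: "nat \<Rightarrow> (nat \<Rightarrow> 'a \<Rightarrow> real) \<Rightarrow> (nat \<Rightarrow> 'a \<Rightarrow> real) \<Rightarrow> 'a \<Rightarrow> real" where
  "beta_hat n X Y \<omega> =
     (1 / real n) * (\<Sum>i<n. if sgn (X i \<omega>) * sgn (Y i \<omega>) = 1 then 1 else 0)"

definition rho_hat :: "nat \<Rightarrow> (nat \<Rightarrow> 'a \<Rightarrow> real) \<Rightarrow> (nat \<Rightarrow> 'a \<Rightarrow> real) \<Rightarrow> 'a \<Rightarrow> real" where
  "rho_hat n X Y \<omega> = - cos (pi * beta_hat n X Y \<omega>)"

end

theory Submission
  imports Defs "HOL-Real_Asymp.Real_Asymp"
begin

text \<open>The sign-agreement indicators of the n sample pairs are i.i.d. Bernoulli variables with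
mean \<open>\<beta> = 1/2 + arcsin \<rho> / \<pi>\<close> (Sheppard's formula), so that \<open>\<rho> = - cos (\<pi> \<beta>)\<close>. Hoeffding's
inequality bounds the probability of \<open>\<bar>beta_hat - \<beta>\<bar> \<ge> \<epsilon>\<close> by \<open>2 exp (-2 n \<epsilon>\<^sup>2)\<close>, and since
\<open>- cos (\<pi> _)\<close> is \<open>\<pi>\<close>-Lipschitz, \<open>\<bar>rho_hat - \<rho>\<bar> \<ge> \<delta>\<close> forces \<open>\<bar>beta_hat - \<beta>\<bar> \<ge> \<delta> / \<pi>\<close>.

For Sheppard's formula write the pair as \<open>(x, \<rho> x + sqrt (1 - \<rho>\<^sup>2) y)\<close> with independent
standard normals \<open>x, y\<close> and substitute \<open>y = x t\<close> for fixed \<open>x\<close>: the ratio \<open>t\<close> has the Cauchy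
density \<open>1 / (\<pi> (1 + t\<^sup>2))\<close>, and the two coordinates have the same sign iff
\<open>t > - \<rho> / sqrt (1 - \<rho>\<^sup>2)\<close>, an event of probability
\<open>1/2 + arctan (\<rho> / sqrt (1 - \<rho>\<^sup>2)) / \<pi> = 1/2 + arcsin \<rho> / \<pi>\<close>.\<close>

lemma nn_integral_x_exp_neg_sq_atLeast_0:
  fixes k :: real
  assumes "k > 0"
  shows "(\<integral>\<^sup>+x. ennreal (x * exp (- (k * x\<^sup>2))) * indicator {0..} x \<partial>lborel) = ennreal (1 / (2 * k))"
proof -
  have "(\<integral>\<^sup>+x. ennreal (x * exp (- (k * x\<^sup>2))) * indicator {0..} x \<partial>lborel)
      = ennreal (0 - (- exp (- (k * 0\<^sup>2)) / (2 * k)))"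
  proof (rule nn_integral_FTC_atLeast)
    show "((\<lambda>x::real. - exp (- (k * x\<^sup>2)) / (2 * k)) \<longlongrightarrow> 0) at_top"
      using \<open>k > 0\<close> by real_asymp
  qed (use \<open>k > 0\<close> in \<open>auto intro!: derivative_eq_intros simp: field_simps\<close>)
  then show ?thesis by simp
qed

lemma nn_integral_abs_mult_std_normal_density:
  fixes t :: real
  shows "(\<integral>\<^sup>+x. ennreal (\<bar>x\<bar> * std_normal_density x * std_normal_density (x * t)) \<partial>lborel)
         = ennreal (1 / (pi * (1 + t\<^sup>2)))"
proof -
  define k where "k = (1 + t\<^sup>2) / 2"
  have "k > 0" unfolding k_def by (simp add: add_pos_nonneg)
  define g where "g x = ennreal (x * exp (- (k * x\<^sup>2))) * indicator {0..} x" for x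
  have g_borel[measurable]: "g \<in> borel_measurable borel" unfolding g_def by measurable
  have "std_normal_density x * std_normal_density (x * t) = exp (- (k * x\<^sup>2)) / (2 * pi)" for x
    unfolding k_def
    by (simp add: std_normal_density_def mult_exp_exp field_simps power2_eq_square
        flip: real_sqrt_mult)
  then have split: "ennreal (\<bar>x\<bar> * std_normal_density x * std_normal_density (x * t))
      = ennreal (1 / (2 * pi)) * (g x + g (0 + (-1) * x))" for x
    unfolding g_def
    by (cases "x \<ge> 0")
      (auto simp: mult.assoc indicator_def ennreal_mult'[symmetric] ennreal_mult[symmetric])
  have "(\<integral>\<^sup>+x. ennreal (\<bar>x\<bar> * std_normal_density x * std_normal_density (x * t)) \<partial>lborel)
      = ennreal (1 / (2 * pi)) * ((\<integral>\<^sup>+x. g x \<partial>lborel) + (\<integral>\<^sup>+x. g (0 + (-1) * x) \<partial>lborel))"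
    unfolding split by (subst nn_integral_cmult, measurable) (subst nn_integral_add, auto)
  also have "(\<integral>\<^sup>+x. g (0 + (-1) * x) \<partial>lborel) = (\<integral>\<^sup>+x. g x \<partial>lborel)"
    using nn_integral_real_affine[OF g_borel, of "-1" 0] by simp
  also have "(\<integral>\<^sup>+x. g x \<partial>lborel) = ennreal (1 / (2 * k))"
    unfolding g_def using \<open>k > 0\<close> by (rule nn_integral_x_exp_neg_sq_atLeast_0)
  also have "ennreal (1 / (2 * pi)) * (ennreal (1 / (2 * k)) + ennreal (1 / (2 * k)))
      = ennreal (1 / (2 * pi) * (1 / k))"
    using \<open>k > 0\<close> by (simp add: ennreal_mult[symmetric] flip: ennreal_plus)
  also have "1 / (2 * pi) * (1 / k) = 1 / (pi * (1 + t\<^sup>2))"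
    unfolding k_def by simp
  finally show ?thesis .
qed

lemma nn_integral_cauchy_density_greaterThan:
  fixes a :: real
  shows "(\<integral>\<^sup>+t. ennreal (1 / (pi * (1 + t\<^sup>2))) * indicator {a<..} t \<partial>lborel)
         = ennreal (1 / 2 - arctan a / pi)"
proof -
  have "(\<integral>\<^sup>+t. ennreal (1 / (pi * (1 + t\<^sup>2))) * indicator {a<..} t \<partial>lborel)
      = (\<integral>\<^sup>+t. ennreal (1 / (pi * (1 + t\<^sup>2))) * indicator {a..} t \<partial>lborel)"
    by (intro nn_integral_cong_AE AE_I[where N="{a}"]) (auto split: split_indicator)
  also have "\<dots> = ennreal ((pi / 2) / pi - arctan a / pi)"
  proof (rule nn_integral_FTC_atLeast)
    show "((\<lambda>t. arctan t / pi) \<longlongrightarrow> (pi / 2) / pi) at_top"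
      by (intro tendsto_intros) (simp_all add: tendsto_arctan_at_top)
  next
    fix t :: real
    have "1 + t\<^sup>2 > 0" by (simp add: add_pos_nonneg)
    then show "DERIV (\<lambda>t. arctan t / pi) t :> 1 / (pi * (1 + t\<^sup>2))"
      using DERIV_cdivide[OF DERIV_arctan[of t], of pi] by (simp add: inverse_eq_divide mult.commute)
    show "0 \<le> 1 / (pi * (1 + t\<^sup>2))" using \<open>1 + t\<^sup>2 > 0\<close> by simp
  qed auto
  finally show ?thesis by simp
qed

definition sgn_agree :: "real \<times> real \<Rightarrow> real" where
  "sgn_agree = (\<lambda>(u, v). if sgn u * sgn v = 1 then 1 else 0)"

lemma sgn_agree_Pair: "sgn_agree (u, v) = (if sgn u * sgn v = 1 then 1 else 0)"
  by (simp add: sgn_agree_def)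

lemma borel_measurable_sgn_agree [measurable]: "sgn_agree \<in> borel_measurable (borel \<Otimes>\<^sub>M borel)"
  unfolding sgn_agree_def by measurable

lemma sgn_agree_bounds: "0 \<le> sgn_agree z" "sgn_agree z \<le> 1"
  by (auto simp: sgn_agree_def split: prod.splits)

lemma sgn_agree_mult_ratio:
  fixes \<rho> s x t :: real
  assumes "x \<noteq> 0" and "s > 0"
  shows "sgn_agree (x, \<rho> * x + s * (x * t)) = indicator {- (\<rho> / s)<..} t"
proof -
  have "\<rho> * x + s * (x * t) = x * (\<rho> + s * t)" by (simp add: algebra_simps)
  then have "sgn x * sgn (\<rho> * x + s * (x * t)) = sgn (\<rho> + s * t)"
    using \<open>x \<noteq> 0\<close> by (simp add: sgn_mult mult.assoc[symmetric] sgn_mult_self_eq)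
  moreover have "sgn (\<rho> + s * t) = 1 \<longleftrightarrow> - (\<rho> / s) < t"
    using \<open>s > 0\<close> by (auto simp: sgn_if field_simps)
  ultimately show ?thesis by (simp add: sgn_agree_Pair indicator_def)
qed

lemma nn_integral_sgn_agree_std_normal_ratio:
  fixes \<rho> s x :: real
  assumes "s > 0"
  shows "ennreal (std_normal_density x) *
           (\<integral>\<^sup>+y. ennreal (std_normal_density y) * ennreal (sgn_agree (x, \<rho> * x + s * y)) \<partial>lborel)
         = (\<integral>\<^sup>+t. ennreal (\<bar>x\<bar> * std_normal_density x * std_normal_density (x * t))
                  * indicator {- (\<rho> / s)<..} t \<partial>lborel)"
proof (cases "x = 0")
  case True
  then show ?thesis by (simp add: sgn_agree_Pair)
next
  case False
  have "(\<integral>\<^sup>+y. ennreal (std_normal_density y) * ennreal (sgn_agree (x, \<rho> * x + s * y)) \<partial>lborel)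
      = \<bar>x\<bar> * (\<integral>\<^sup>+t. ennreal (std_normal_density (0 + x * t))
                       * ennreal (sgn_agree (x, \<rho> * x + s * (0 + x * t))) \<partial>lborel)"
    using False by (intro nn_integral_real_affine) auto
  also have "\<dots> = \<bar>x\<bar> * (\<integral>\<^sup>+t. ennreal (std_normal_density (x * t)) * indicator {- (\<rho> / s)<..} t \<partial>lborel)"
    using False \<open>s > 0\<close> by (simp add: sgn_agree_mult_ratio ennreal_indicator)
  finally show ?thesis
    by (simp add: nn_integral_cmult[symmetric] ennreal_mult mult_ac)
qed

lemma nn_integral_sgn_agree_std_normal_nondegenerate:
  fixes \<rho> :: real
  assumes "-1 < \<rho>" and "\<rho> < 1"
  shows "(\<integral>\<^sup>+x. ennreal (std_normal_density x) *
            (\<integral>\<^sup>+y. ennreal (std_normal_density y) *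
               ennreal (sgn_agree (x, \<rho> * x + sqrt (1 - \<rho>\<^sup>2) * y)) \<partial>lborel) \<partial>lborel)
         = ennreal (1 / 2 + arcsin \<rho> / pi)"
proof -
  define s where "s = sqrt (1 - \<rho>\<^sup>2)"
  have "\<rho>\<^sup>2 < 1" using assms by (simp add: abs_square_less_1)
  then have "s > 0" unfolding s_def by simp
  have "(\<integral>\<^sup>+x. ennreal (std_normal_density x) *
            (\<integral>\<^sup>+y. ennreal (std_normal_density y) * ennreal (sgn_agree (x, \<rho> * x + s * y)) \<partial>lborel) \<partial>lborel)
     = (\<integral>\<^sup>+x. \<integral>\<^sup>+t. ennreal (\<bar>x\<bar> * std_normal_density x * std_normal_density (x * t))
                       * indicator {- (\<rho> / s)<..} t \<partial>lborel \<partial>lborel)"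
    using \<open>s > 0\<close> by (simp add: nn_integral_sgn_agree_std_normal_ratio)
  also have "\<dots> = (\<integral>\<^sup>+t. \<integral>\<^sup>+x. ennreal (\<bar>x\<bar> * std_normal_density x * std_normal_density (x * t))
                       * indicator {- (\<rho> / s)<..} t \<partial>lborel \<partial>lborel)"
    by (rule lborel_pair.Fubini'[symmetric]) measurable
  also have "\<dots> = (\<integral>\<^sup>+t. ennreal (1 / (pi * (1 + t\<^sup>2))) * indicator {- (\<rho> / s)<..} t \<partial>lborel)"
    by (subst nn_integral_multc) (simp_all add: nn_integral_abs_mult_std_normal_density)
  also have "\<dots> = ennreal (1 / 2 - arctan (- (\<rho> / s)) / pi)"
    by (rule nn_integral_cauchy_density_greaterThan)
  also have "arctan (- (\<rho> / s)) = - arcsin \<rho>"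
    unfolding s_def using arcsin_arctan[OF assms] by (simp add: arctan_minus)
  finally show ?thesis unfolding s_def by simp
qed

lemma nn_integral_sgn_agree_std_normal:
  fixes \<rho> :: real
  assumes "-1 \<le> \<rho>" and "\<rho> \<le> 1"
  shows "(\<integral>\<^sup>+x. ennreal (std_normal_density x) *
            (\<integral>\<^sup>+y. ennreal (std_normal_density y) *
               ennreal (sgn_agree (x, \<rho> * x + sqrt (1 - \<rho>\<^sup>2) * y)) \<partial>lborel) \<partial>lborel)
         = ennreal (1 / 2 + arcsin \<rho> / pi)"
proof -
  have std_normal_total: "(\<integral>\<^sup>+x. ennreal (std_normal_density x) \<partial>lborel) = 1"
    by (subst nn_integral_eq_integral) auto
  consider "\<rho> = 1" | "\<rho> = -1" | "-1 < \<rho> \<and> \<rho> < 1"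
    using assms by linarith
  then show ?thesis
  proof cases
    case 1
    have "(\<integral>\<^sup>+x. ennreal (std_normal_density x) *
              (\<integral>\<^sup>+y. ennreal (std_normal_density y) * ennreal (sgn_agree (x, x)) \<partial>lborel) \<partial>lborel)
        = (\<integral>\<^sup>+x. ennreal (std_normal_density x) \<partial>lborel)"
      using std_normal_total
      by (intro nn_integral_cong_AE eventually_mono[OF AE_lborel_singleton[of 0]])
        (simp add: sgn_agree_Pair sgn_mult_self_eq)
    then show ?thesis using 1 std_normal_total by simp
  next
    case 2
    have "sgn x * sgn (- x) \<noteq> 1" for x :: real
      by (cases "x = 0") (auto simp: sgn_if)
    then show ?thesis using 2 by (simp add: sgn_agree_Pair)
  next
    case 3
    then show ?thesis by (intro nn_integral_sgn_agree_std_normal_nondegenerate) auto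
  qed
qed

theorem integral_sgn_agree_std_bivariate_normal:
  fixes \<rho> :: real
  assumes "-1 \<le> \<rho>" and "\<rho> \<le> 1"
  shows "integral\<^sup>L (std_bivariate_normal \<rho>) sgn_agree = 1 / 2 + arcsin \<rho> / pi"
proof -
  define N where "N = density lborel std_normal_density"
  interpret N: prob_space N unfolding N_def by (rule prob_space_normal_density) simp
  have [measurable_cong]: "sets N = sets borel" unfolding N_def by simp
  define T where "T = (\<lambda>(z1::real, z2::real). (z1, \<rho> * z1 + sqrt (1 - \<rho>\<^sup>2) * z2))"
  have [measurable]: "T \<in> measurable (N \<Otimes>\<^sub>M N) (borel \<Otimes>\<^sub>M borel)"
    unfolding T_def by measurable
  have "integral\<^sup>L (std_bivariate_normal \<rho>) sgn_agree = integral\<^sup>L (N \<Otimes>\<^sub>M N) (\<lambda>z. sgn_agree (T z))"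
    unfolding std_bivariate_normal_def N_def[symmetric] T_def[symmetric]
    by (rule integral_distr) measurable
  also have "\<dots> = enn2real (\<integral>\<^sup>+z. ennreal (sgn_agree (T z)) \<partial>(N \<Otimes>\<^sub>M N))"
    by (rule integral_eq_nn_integral) (auto simp: sgn_agree_bounds)
  also have "(\<integral>\<^sup>+z. ennreal (sgn_agree (T z)) \<partial>(N \<Otimes>\<^sub>M N))
      = (\<integral>\<^sup>+x. \<integral>\<^sup>+y. ennreal (sgn_agree (T (x, y))) \<partial>N \<partial>N)"
    by (rule N.nn_integral_fst[symmetric]) measurable
  also have "\<dots> = ennreal (1 / 2 + arcsin \<rho> / pi)"
    unfolding N_def T_def
    by (subst nn_integral_density; simp?; measurable?)+
      (rule nn_integral_sgn_agree_std_normal[OF assms])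
  finally show ?thesis
    using arcsin_lbound[of \<rho>] assms by (simp add: field_simps)
qed

lemma minus_cos_pi_half_plus_arcsin: "-1 \<le> \<rho> \<Longrightarrow> \<rho> \<le> 1 \<Longrightarrow> - cos (pi * (1 / 2 + arcsin \<rho> / pi)) = \<rho>"
  by (simp add: distrib_left cos_add)

lemma abs_cos_diff_le: "\<bar>cos a - cos b\<bar> \<le> \<bar>a - b\<bar>" for a b :: real
proof -
  have "\<bar>cos a - cos b\<bar> = 2 * \<bar>sin ((a + b) / 2)\<bar> * \<bar>sin ((b - a) / 2)\<bar>"
    by (simp add: cos_diff_cos abs_mult)
  also have "\<dots> \<le> 2 * 1 * \<bar>(b - a) / 2\<bar>"
    by (intro mult_mono abs_sin_x_le_abs_x) auto
  finally show ?thesis by simp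
qed

lemma beta_hat_concentration:
  fixes M :: "'a measure" and X Y :: "nat \<Rightarrow> 'a \<Rightarrow> real"
  assumes "prob_space M"
    and "-1 \<le> \<rho>" and "\<rho> \<le> 1"
    and X_borel: "\<And>i. i < n \<Longrightarrow> X i \<in> borel_measurable M"
    and Y_borel: "\<And>i. i < n \<Longrightarrow> Y i \<in> borel_measurable M"
    and distr_XY: "\<And>i. i < n \<Longrightarrow>
           distr M (borel \<Otimes>\<^sub>M borel) (\<lambda>\<omega>. (X i \<omega>, Y i \<omega>)) = std_bivariate_normal \<rho>"
    and indep_XY: "prob_space.indep_vars M (\<lambda>_. borel \<Otimes>\<^sub>M borel) (\<lambda>i \<omega>. (X i \<omega>, Y i \<omega>)) {..<n}"
    and "n > 0" and "\<epsilon> \<ge> 0"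
  shows "measure M {\<omega> \<in> space M. \<bar>beta_hat n X Y \<omega> - (1 / 2 + arcsin \<rho> / pi)\<bar> \<ge> \<epsilon>}
           \<le> 2 * exp (- 2 * real n * \<epsilon>\<^sup>2)"
proof -
  interpret prob_space M by fact
  define Z where "Z i \<omega> = sgn_agree (X i \<omega>, Y i \<omega>)" for i \<omega>
  have XY_borel: "(\<lambda>\<omega>. (X i \<omega>, Y i \<omega>)) \<in> measurable M (borel \<Otimes>\<^sub>M borel)" if "i < n" for i
    using X_borel[OF that] Y_borel[OF that] by measurable
  have distr_Z: "distr M borel (Z i) = distr (std_bivariate_normal \<rho>) borel sgn_agree" if "i < n" for i
    unfolding Z_def distr_XY[OF that, symmetric]
    by (subst distr_distr) (auto simp: XY_borel[OF that] comp_def)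
  have "expectation (Z 0) = integral\<^sup>L (std_bivariate_normal \<rho>) sgn_agree"
    unfolding Z_def distr_XY[OF \<open>n > 0\<close>, symmetric]
    by (rule integral_distr[symmetric]) (auto simp: XY_borel[OF \<open>n > 0\<close>])
  also have "\<dots> = 1 / 2 + arcsin \<rho> / pi"
    using assms(2,3) by (rule integral_sgn_agree_std_bivariate_normal)
  finally have EZ: "expectation (Z 0) = 1 / 2 + arcsin \<rho> / pi" .
  interpret Hoeffding_ineq_iid M "{..<n}" Z "Z 0" 0 1 "expectation (Z 0)"
  proof unfold_locales
    show "indep_vars (\<lambda>_. borel) Z {..<n}"
      unfolding Z_def by (rule indep_vars_compose2[OF indep_XY]) simp
    show "random_variable borel (Z 0)"
      unfolding Z_def using XY_borel[OF \<open>n > 0\<close>] by measurable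
    show "AE \<omega> in M. Z 0 \<omega> \<in> {0..1}"
      by (simp add: Z_def sgn_agree_bounds)
  qed (use distr_Z \<open>n > 0\<close> in auto)
  have "beta_hat n X Y \<omega> = (\<Sum>i\<in>{..<n}. Z i \<omega>) / real (card {..<n})" for \<omega>
    by (simp add: beta_hat_def Z_def sgn_agree_Pair)
  moreover have "{..<n} \<noteq> {}" using \<open>n > 0\<close> by auto
  ultimately show ?thesis
    using Hoeffding_ineq_abs_ge'[OF \<open>\<epsilon> \<ge> 0\<close> zero_less_one] by (simp add: EZ)
qed

lemma abs_rho_hat_diff_le:
  assumes "-1 \<le> \<rho>" and "\<rho> \<le> 1"
  shows "\<bar>rho_hat n X Y \<omega> - \<rho>\<bar> \<le> pi * \<bar>beta_hat n X Y \<omega> - (1 / 2 + arcsin \<rho> / pi)\<bar>"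
proof -
  define \<beta> where "\<beta> = 1 / 2 + arcsin \<rho> / pi"
  have \<rho>_eq: "\<rho> = - cos (pi * \<beta>)"
    unfolding \<beta>_def using assms by (rule minus_cos_pi_half_plus_arcsin[symmetric])
  have "\<bar>rho_hat n X Y \<omega> - \<rho>\<bar> = \<bar>cos (pi * \<beta>) - cos (pi * beta_hat n X Y \<omega>)\<bar>"
    unfolding rho_hat_def \<rho>_eq by simp
  also have "\<dots> \<le> \<bar>pi * \<beta> - pi * beta_hat n X Y \<omega>\<bar>"
    by (rule abs_cos_diff_le)
  also have "\<dots> = pi * \<bar>beta_hat n X Y \<omega> - \<beta>\<bar>"
    by (simp add: abs_mult abs_minus_commute flip: right_diff_distrib)
  finally show ?thesis unfolding \<beta>_def .
qed

theorem lemma1: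
  fixes M :: "'a measure" and X Y :: "nat \<Rightarrow> 'a \<Rightarrow> real"
    and \<rho> \<delta> :: real and n :: nat
  assumes "prob_space M"
    and "-1 \<le> \<rho>" and "\<rho> \<le> 1"
    and "\<And>i. i < n \<Longrightarrow> X i \<in> borel_measurable M"
    and "\<And>i. i < n \<Longrightarrow> Y i \<in> borel_measurable M"
    and "\<And>i. i < n \<Longrightarrow>
           distr M (borel \<Otimes>\<^sub>M borel) (\<lambda>\<omega>. (X i \<omega>, Y i \<omega>)) = std_bivariate_normal \<rho>"
    and "prob_space.indep_vars M (\<lambda>_. borel \<Otimes>\<^sub>M borel) (\<lambda>i \<omega>. (X i \<omega>, Y i \<omega>)) {..<n}"
    and "\<delta> \<ge> 0"
  shows "measure M {\<omega> \<in> space M. \<bar>rho_hat n X Y \<omega> - \<rho>\<bar> \<ge> \<delta>}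
           \<le> 2 * exp (- (2 / pi\<^sup>2) * real n * \<delta>\<^sup>2)"
proof -
  interpret prob_space M by fact
  define \<beta> where "\<beta> = 1 / 2 + arcsin \<rho> / pi"
  show ?thesis
  proof (cases "n = 0")
    case True
    then show ?thesis by (simp add: order_trans[OF prob_le_1])
  next
    case False
    have "{\<omega> \<in> space M. \<bar>rho_hat n X Y \<omega> - \<rho>\<bar> \<ge> \<delta>}
        \<subseteq> {\<omega> \<in> space M. \<bar>beta_hat n X Y \<omega> - \<beta>\<bar> \<ge> \<delta> / pi}"
      using abs_rho_hat_diff_le[OF assms(2,3), of n X Y]
      by (auto simp: \<beta>_def divide_le_eq mult.commute intro: order_trans)
    then have "measure M {\<omega> \<in> space M. \<bar>rho_hat n X Y \<omega> - \<rho>\<bar> \<ge> \<delta>}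
        \<le> measure M {\<omega> \<in> space M. \<bar>beta_hat n X Y \<omega> - \<beta>\<bar> \<ge> \<delta> / pi}"
      by (rule finite_measure_mono) (use assms(4,5) in \<open>simp add: beta_hat_def\<close>)
    also have "\<dots> \<le> 2 * exp (- 2 * real n * (\<delta> / pi)\<^sup>2)"
      unfolding \<beta>_def using assms False by (intro beta_hat_concentration) auto
    finally show ?thesis by (simp add: power_divide)
  qed
qed

end
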